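(* Let $g(x)=\sum_{n\ge 1}\frac{2\,(4n+1)!}{(n+1)!\,(3n+2)!}\,x^n$, regarded as a formal power series. For integers $n\ge1$ and $r\ge 2$ define $A_r(n)=\frac{[x^n](g(x))^r}{[x^n]g(x)}$ and $B_r=\lim_{n\to\infty}A_r(n)$. Then for all integers $n\ge 1$: $$A_2(n)=\frac{10(n-1)(n^2+14n+12)}{3(3n+5)(3n+4)(n+2)},\qquad B_2=\frac{10}{27};$$ $$A_3(n)=\frac{5(n-1)(n-2)(5n^4+160n^3+1803n^2+3768n+2016)}{3(3n+8)(3n+5)(3n+7)(3n+4)(n+3)(n+2)},\qquad B_3=\frac{25}{243};$$ $$A_4(n)=\frac{20(n-1)(n-2)(n-3)(25n^6+1350n^5+31495n^4+347406n^3+1211092n^2+1580304n+665280)}{27(3n+11)(3n+8)(3n+5)(3n+10)(3n+7)(3n+4)(n+4)(n+3)(n+2)},\qquad B_4=\frac{500}{19683}.$$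
   Context: For a formal power series $f(x)$, $[x^n]f(x)$ denotes the coefficient of $x^n$ in $f(x)$. *)

theory Defs
  imports Complex_Main "HOL-Computational_Algebra.Formal_Power_Series"
begin

definition g_fps :: "real fps" where
  "g_fps = Abs_fps (\<lambda>n. if n = 0 then 0
      else 2 * fact (4*n+1) / (fact (n+1) * fact (3*n+2)))"

definition A_ratio :: "nat \<Rightarrow> nat \<Rightarrow> real" where
  "A_ratio r n = fps_nth (g_fps ^ r) n / fps_nth g_fps n"

end

theory Submission
  imports Defs "HOL-Real_Asymp.Real_Asymp"
begin

(* Let B be the power series with B = 1 + x B^4.  Its powers have the Fuss-Catalan coefficients
   [x^n] B^k = k/(4n+k) * binomial(4n+k, n), as both sides satisfy B^k = B^(k-1) + x B^(k+3).
   One checks g = 2B^2 - B^3 - 1, so [x^n] g^r is a combination of the coefficients [x^n] B^k.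
   Their consecutive ratios are rational functions of n, hence so is A_r(n), and B_r is read off
   from the leading terms. *)

unbundle fps_syntax

definition fuss_catalan_coeff :: "nat \<Rightarrow> nat \<Rightarrow> nat \<Rightarrow> real" where
  "fuss_catalan_coeff m k n =
     (if k = 0 then of_bool (n = 0)
      else k * fact (m * n + k - 1) / (fact n * fact ((m - 1) * n + k)))"

lemma fuss_catalan_coeff_0_right [simp]: "fuss_catalan_coeff m k 0 = 1"
  by (simp add: fuss_catalan_coeff_def fact_reduce)

(* The coefficientwise form of B^k = B^(k-1) + x B^(k+m-1), i.e. of B = 1 + x B^m. *)
lemma fuss_catalan_coeff_recurrence:
  assumes "m > 0" "k > 0"
  shows "fuss_catalan_coeff m k (Suc n) =
    fuss_catalan_coeff m (k - 1) (Suc n) + fuss_catalan_coeff m (k + m - 1) n"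
proof -
  obtain j l where k: "k = Suc j" and m: "m = Suc l"
    using assms by (metis gr0_implies_Suc)
  define N where "N = m * n + l + j"
  define D where "D = l * n + l + j"
  define C where "C = fact N / (real (Suc n) * fact n * (real (Suc D) * fact D))"
  have lhs: "fuss_catalan_coeff m k (Suc n) = real ((j + 1) * (N + 1)) * C"
    by (simp add: fuss_catalan_coeff_def C_def k m N_def D_def algebra_simps)
  have "fuss_catalan_coeff m (k - 1) (Suc n) = j * fact N / (real (Suc n) * fact n * fact D)"
    by (simp add: fuss_catalan_coeff_def k m N_def D_def algebra_simps)
  also have "\<dots> = real (j * Suc D) * C"
    unfolding C_def by (simp only: of_nat_mult) (simp del: of_nat_Suc)
  finally have step: "fuss_catalan_coeff m (k - 1) (Suc n) = real (j * Suc D) * C" .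
  have "fuss_catalan_coeff m (k + m - 1) n = (j + m) * fact N / (fact n * (real (Suc D) * fact D))"
    by (simp add: fuss_catalan_coeff_def k m N_def D_def algebra_simps)
  also have "\<dots> = real ((j + m) * Suc n) * C"
    unfolding C_def by (simp only: of_nat_mult) (simp del: of_nat_Suc)
  finally have jump: "fuss_catalan_coeff m (k + m - 1) n = real ((j + m) * Suc n) * C" .
  have "(j + 1) * (N + 1) = j * Suc D + (j + m) * Suc n"
    by (simp add: N_def D_def m algebra_simps)
  then show ?thesis
    unfolding lhs step jump by (simp only: of_nat_add distrib_right)
qed

lemma fuss_catalan_coeff_Suc_exponent:
  assumes "k > 0"
  shows "fuss_catalan_coeff m (Suc k) n =
    fuss_catalan_coeff m k n * (real (Suc k) / k) * (m * n + k) / ((m - 1) * n + k + 1)"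
proof -
  define a where "a = m * n + k - 1"
  define b where "b = (m - 1) * n + k"
  have a: "m * n + k = Suc a" and b: "(m - 1) * n + k + 1 = Suc b"
    using assms by (simp_all add: a_def b_def)
  have succ: "fuss_catalan_coeff m (Suc k) n =
      real (Suc k) * (real (Suc a) * fact a) / (fact n * (real (Suc b) * fact b))"
    using a b by (simp add: fuss_catalan_coeff_def del: of_nat_Suc)
  have base: "fuss_catalan_coeff m k n = k * fact a / (fact n * fact b)"
    using assms by (simp add: fuss_catalan_coeff_def a_def b_def)
  show ?thesis
    using assms unfolding succ base a b by (simp add: field_simps del: of_nat_Suc)
qed

lemma fuss_catalan_coeff_numeral_exponent:
  assumes "pred_numeral w > 0"
  shows "fuss_catalan_coeff m (numeral w) n = fuss_catalan_coeff m (pred_numeral w) n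
    * (real (numeral w) / pred_numeral w) * (m * n + pred_numeral w)
    / ((m - 1) * n + pred_numeral w + 1)"
  unfolding numeral_eq_Suc by (rule fuss_catalan_coeff_Suc_exponent[OF assms])

lemma fuss_catalan_coeff_pos:
  assumes "k > 0"
  shows "fuss_catalan_coeff m k n > 0"
  using assms by (simp add: fuss_catalan_coeff_def)

lemma fps_family_eq_by_recurrence:
  fixes R S :: "nat \<Rightarrow> 'a::comm_ring_1 fps"
  assumes "R 0 = S 0"
    and R: "\<And>k. k > 0 \<Longrightarrow> R k = R (k - 1) + fps_X * R (k + m - 1)"
    and S: "\<And>k. k > 0 \<Longrightarrow> S k = S (k - 1) + fps_X * S (k + m - 1)"
  shows "R = S"
proof -
  have "R k $ n = S k $ n" for k n
  proof (induction n arbitrary: k rule: less_induct)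
    case (less n)
    show ?case
    proof (induction k)
      case 0
      show ?case using \<open>R 0 = S 0\<close> by simp
    next
      case (Suc k)
      then show ?case
        using R[of "Suc k"] S[of "Suc k"] less.IH[of "n - 1"] by simp
    qed
  qed
  then show ?thesis by (simp add: fun_eq_iff fps_eq_iff)
qed

definition fuss_catalan :: "nat \<Rightarrow> real fps" where
  "fuss_catalan m = Abs_fps (fuss_catalan_coeff m 1)"

lemma fps_nth_fuss_catalan_power:
  assumes "m > 0"
  shows "fuss_catalan m ^ k $ n = fuss_catalan_coeff m k n"
proof -
  define P where "P k = Abs_fps (fuss_catalan_coeff m k)" for k
  have rec: "P k = P (k - 1) + fps_X * P (k + m - 1)" if "k > 0" for k
  proof (rule fps_ext)
    fix n
    show "P k $ n = (P (k - 1) + fps_X * P (k + m - 1)) $ n"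
      using fuss_catalan_coeff_recurrence[OF assms that]
      by (cases n) (simp_all add: P_def)
  qed
  have P0: "P 0 = 1"
    by (rule fps_ext) (simp add: P_def fuss_catalan_coeff_def)
  have "(\<lambda>k. P a * P k) = (\<lambda>k. P (a + k))" for a
  proof (rule fps_family_eq_by_recurrence)
    show "P a * P 0 = P (a + 0)" by (simp add: P0)
    show "P a * P k = P a * P (k - 1) + fps_X * (P a * P (k + m - 1))" if "k > 0" for k
      using rec[OF that] by (simp add: algebra_simps)
    show "P (a + k) = P (a + (k - 1)) + fps_X * P (a + (k + m - 1))" if "k > 0" for k
      using rec[of "a + k"] that by (simp add: add_diff_assoc add.assoc)
  qed
  then have "P 1 ^ k = P k"
    by (induction k) (simp_all add: P0 fun_eq_iff)
  then show ?thesis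
    by (simp add: fuss_catalan_def P_def)
qed

lemma g_fps_nth:
  assumes "n > 0"
  shows "g_fps $ n = fuss_catalan_coeff 4 2 n / (n + 1)"
  using assms by (simp add: g_fps_def fuss_catalan_coeff_def field_simps)

lemma g_fps_eq_fuss_catalan: "g_fps = 2 * fuss_catalan 4 ^ 2 - fuss_catalan 4 ^ 3 - 1"
proof (rule fps_ext)
  fix n
  show "g_fps $ n = (2 * fuss_catalan 4 ^ 2 - fuss_catalan 4 ^ 3 - 1) $ n"
  proof (cases "n = 0")
    case True
    then show ?thesis by (simp add: g_fps_def fps_nth_fuss_catalan_power numeral_fps_const)
  next
    case False
    with fuss_catalan_coeff_pos[of 1 4 n] show ?thesis
      by (simp add: g_fps_nth fps_nth_fuss_catalan_power numeral_fps_const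
          fuss_catalan_coeff_numeral_exponent divide_simps) (simp add: algebra_simps)
  qed
qed

lemma A_ratio_eq_fps_nth_power:
  assumes "n > 0"
  shows "A_ratio r n = (n + 1) * (g_fps ^ r $ n) / fuss_catalan_coeff 4 2 n"
  using assms by (simp add: A_ratio_def g_fps_nth)

lemma A_ratio_2:
  assumes "n \<ge> 1"
  shows "A_ratio 2 n = 10 * (real n - 1) * ((real n)^2 + 14 * real n + 12)
    / (3 * (3 * real n + 5) * (3 * real n + 4) * (real n + 2))"
proof -
  let ?B = "fuss_catalan 4" and ?t = "\<lambda>k. fuss_catalan_coeff 4 k n"
  have "g_fps ^ 2 = ?B ^ 6 - 4 * ?B ^ 5 + 4 * ?B ^ 4 + 2 * ?B ^ 3 - 4 * ?B ^ 2 + 1"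
    unfolding g_fps_eq_fuss_catalan by (simp add: eval_nat_numeral algebra_simps)
  then have "A_ratio 2 n = (n + 1) * (?t 6 - 4 * ?t 5 + 4 * ?t 4 + 2 * ?t 3 - 4 * ?t 2) / ?t 2"
    using assms by (simp add: A_ratio_eq_fps_nth_power fps_nth_fuss_catalan_power numeral_fps_const)
  also have "\<dots> = 10 * (real n - 1) * ((real n)^2 + 14 * real n + 12)
      / (3 * (3 * real n + 5) * (3 * real n + 4) * (real n + 2))"
    using assms fuss_catalan_coeff_pos[of 1 4 n]
    by (simp add: fuss_catalan_coeff_numeral_exponent divide_simps)
      (simp add: algebra_simps power2_eq_square)
  finally show ?thesis .
qed

lemma A_ratio_3:
  assumes "n \<ge> 1"
  shows "A_ratio 3 n = 5 * (real n - 1) * (real n - 2)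
    * (5 * (real n)^4 + 160 * (real n)^3 + 1803 * (real n)^2 + 3768 * real n + 2016)
    / (3 * (3 * real n + 8) * (3 * real n + 5) * (3 * real n + 7) * (3 * real n + 4)
       * (real n + 3) * (real n + 2))"
proof -
  let ?B = "fuss_catalan 4" and ?t = "\<lambda>k. fuss_catalan_coeff 4 k n"
  have "g_fps ^ 3 = - (?B ^ 9) + 6 * ?B ^ 8 - 12 * ?B ^ 7 + 5 * ?B ^ 6 + 12 * ?B ^ 5
      - 12 * ?B ^ 4 - 3 * ?B ^ 3 + 6 * ?B ^ 2 - 1"
    unfolding g_fps_eq_fuss_catalan by (simp add: eval_nat_numeral algebra_simps)
  then have "A_ratio 3 n = (n + 1) * (- ?t 9 + 6 * ?t 8 - 12 * ?t 7 + 5 * ?t 6 + 12 * ?t 5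
      - 12 * ?t 4 - 3 * ?t 3 + 6 * ?t 2) / ?t 2"
    using assms by (simp add: A_ratio_eq_fps_nth_power fps_nth_fuss_catalan_power numeral_fps_const)
  also have "\<dots> = 5 * (real n - 1) * (real n - 2)
      * (5 * (real n)^4 + 160 * (real n)^3 + 1803 * (real n)^2 + 3768 * real n + 2016)
      / (3 * (3 * real n + 8) * (3 * real n + 5) * (3 * real n + 7) * (3 * real n + 4)
         * (real n + 3) * (real n + 2))"
    using assms fuss_catalan_coeff_pos[of 1 4 n]
    by (simp add: fuss_catalan_coeff_numeral_exponent divide_simps)
      (simp add: algebra_simps eval_nat_numeral)
  finally show ?thesis .
qed

lemma A_ratio_4:
  assumes "n \<ge> 1"
  shows "A_ratio 4 n = 20 * (real n - 1) * (real n - 2) * (real n - 3)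
    * (25 * (real n)^6 + 1350 * (real n)^5 + 31495 * (real n)^4 + 347406 * (real n)^3
       + 1211092 * (real n)^2 + 1580304 * real n + 665280)
    / (27 * (3 * real n + 11) * (3 * real n + 8) * (3 * real n + 5) * (3 * real n + 10)
       * (3 * real n + 7) * (3 * real n + 4) * (real n + 4) * (real n + 3) * (real n + 2))"
proof -
  let ?B = "fuss_catalan 4" and ?t = "\<lambda>k. fuss_catalan_coeff 4 k n"
  have "g_fps ^ 4 = ?B ^ 12 - 8 * ?B ^ 11 + 24 * ?B ^ 10 - 28 * ?B ^ 9 - 8 * ?B ^ 8
      + 48 * ?B ^ 7 - 26 * ?B ^ 6 - 24 * ?B ^ 5 + 24 * ?B ^ 4 + 4 * ?B ^ 3 - 8 * ?B ^ 2 + 1"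
    unfolding g_fps_eq_fuss_catalan by (simp add: eval_nat_numeral algebra_simps)
  then have "A_ratio 4 n = (n + 1) * (?t 12 - 8 * ?t 11 + 24 * ?t 10 - 28 * ?t 9 - 8 * ?t 8
      + 48 * ?t 7 - 26 * ?t 6 - 24 * ?t 5 + 24 * ?t 4 + 4 * ?t 3 - 8 * ?t 2) / ?t 2"
    using assms by (simp add: A_ratio_eq_fps_nth_power fps_nth_fuss_catalan_power numeral_fps_const)
  also have "\<dots> = 20 * (real n - 1) * (real n - 2) * (real n - 3)
      * (25 * (real n)^6 + 1350 * (real n)^5 + 31495 * (real n)^4 + 347406 * (real n)^3
         + 1211092 * (real n)^2 + 1580304 * real n + 665280)
      / (27 * (3 * real n + 11) * (3 * real n + 8) * (3 * real n + 5) * (3 * real n + 10)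
         * (3 * real n + 7) * (3 * real n + 4) * (real n + 4) * (real n + 3) * (real n + 2))"
    using assms fuss_catalan_coeff_pos[of 1 4 n]
    by (simp add: fuss_catalan_coeff_numeral_exponent divide_simps)
      (simp add: algebra_simps eval_nat_numeral)
  finally show ?thesis .
qed

theorem mainTheorem3:
  shows "(\<forall>n::nat. n \<ge> 1 \<longrightarrow>
      A_ratio 2 n = 10 * (real n - 1) * ((real n)^2 + 14 * real n + 12)
        / (3 * (3 * real n + 5) * (3 * real n + 4) * (real n + 2))
    \<and> A_ratio 3 n = 5 * (real n - 1) * (real n - 2)
        * (5 * (real n)^4 + 160 * (real n)^3 + 1803 * (real n)^2 + 3768 * real n + 2016)
        / (3 * (3 * real n + 8) * (3 * real n + 5) * (3 * real n + 7) * (3 * real n + 4)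
             * (real n + 3) * (real n + 2))
    \<and> A_ratio 4 n = 20 * (real n - 1) * (real n - 2) * (real n - 3)
        * (25 * (real n)^6 + 1350 * (real n)^5 + 31495 * (real n)^4 + 347406 * (real n)^3
           + 1211092 * (real n)^2 + 1580304 * real n + 665280)
        / (27 * (3 * real n + 11) * (3 * real n + 8) * (3 * real n + 5) * (3 * real n + 10)
             * (3 * real n + 7) * (3 * real n + 4) * (real n + 4) * (real n + 3) * (real n + 2)))
    \<and> (\<lambda>n. A_ratio 2 n) \<longlonglongrightarrow> 10 / 27
    \<and> (\<lambda>n. A_ratio 3 n) \<longlonglongrightarrow> 25 / 243
    \<and> (\<lambda>n. A_ratio 4 n) \<longlonglongrightarrow> 500 / 19683"
proof -
  have "(\<lambda>n. A_ratio 2 n) \<longlonglongrightarrow> 10 / 27"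
    by (rule tendsto_cong[THEN iffD2], rule eventually_sequentiallyI, erule A_ratio_2) real_asymp
  moreover have "(\<lambda>n. A_ratio 3 n) \<longlonglongrightarrow> 25 / 243"
    by (rule tendsto_cong[THEN iffD2], rule eventually_sequentiallyI, erule A_ratio_3) real_asymp
  moreover have "(\<lambda>n. A_ratio 4 n) \<longlonglongrightarrow> 500 / 19683"
    by (rule tendsto_cong[THEN iffD2], rule eventually_sequentiallyI, erule A_ratio_4) real_asymp
  ultimately show ?thesis
    using A_ratio_2 A_ratio_3 A_ratio_4 by blast
qed

end
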